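(* Let $2\le r_1<r_2$ be integers, let $T\in\mathfrak{F}(n)$ and let $\lambda=\rho(T)$. Put $\theta=\frac{-\lambda-\sqrt{\lambda^2-4}}{2}$ and $a_2=-\lambda+\frac{1}{\lambda}$. For a real $r\ge 2$ define the sequence $z_1(r)=-\lambda-\frac{r}{a_2}$, $z_{j+1}(r)=-\lambda-\frac{1}{z_j(r)}$ for $j\ge1$. Then: (a) $z_j(r)=\theta+\frac{\theta^{-1}-\theta}{\beta(\theta^2)^j+1}$, where $\beta=\beta(r)=\frac{r-a_2\theta}{a_2\theta-r\theta^2}$; (b) $\beta(r)$ is a continuous function of $r$ on $(2,\infty)\setminus\{r_*\}$, where $r_*=\frac{a_2}{\theta}$; moreover $\beta(r)$ has a single root, at $r^*=a_2\theta$, and $\beta(r)>0$ for $r\in(r_*,r^* )$; (c) for $r\in\{r_1,r_2\}$, the sequence $(z_j(r))_{j\ge1}$ satisfies $z_j(r)<0$ for all $j\ge1$, is decreasing, and $\lim_{j\to\infty}z_j(r)=\theta$.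
   Context: $\rho(G)$ denotes the spectral radius (largest eigenvalue of the adjacency matrix) of a graph $G$. For integers $h,q_1,q_2\ge 2$ and fixed integers $2\le r_1<r_2$, the tree $[h,q_1,q_2]$ is constructed as follows: take a vertex $u$; attach to $u$ a pendant path with $h$ edges; attach to $u$ a path with $q_1$ edges ending at a vertex $v_1$, and attach to $v_1$ exactly $r_1$ pendant paths with $2$ edges each; attach to $u$ a path with $q_2$ edges ending at a vertex $v_2$, and attach to $v_2$ exactly $r_2$ pendant paths with $2$ edges each. It has $n=1+h+q_1+q_2+2(r_1+r_2)$ vertices. $\mathfrak{F}(n)$ is the set of all such trees $[h,q_1,q_2]$ with $h,q_1,q_2\ge2$ and $h+q_1+q_2=n-1-2(r_1+r_2)$. *)

theory Defs
  imports Complex_Main "Jordan_Normal_Form.Char_Poly"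
begin

text \<open>Vertex 0 is u; vertices 1..h form the
  pendant path of h edges; u, h+1, ..., h+q1 is the path of q1 edges ending at
  v1 = h+q1; u, h+q1+1, ..., h+q1+q2 is the path of q2 edges ending at
  v2 = h+q1+q2; the remaining vertices form the r1 (resp. r2) pendant paths
  of 2 edges attached at v1 (resp. v2).\<close>

definition tree_order :: "nat \<Rightarrow> nat \<Rightarrow> nat \<Rightarrow> nat \<Rightarrow> nat \<Rightarrow> nat" where
  "tree_order r1 r2 h q1 q2 = 1 + h + q1 + q2 + 2 * (r1 + r2)"

definition tree_edges :: "nat \<Rightarrow> nat \<Rightarrow> nat \<Rightarrow> nat \<Rightarrow> nat \<Rightarrow> (nat \<times> nat) set" where
  "tree_edges r1 r2 h q1 q2 =
    (let v1 = h + q1; v2 = h + q1 + q2; b1 = h + q1 + q2 + 1; b2 = h + q1 + q2 + 1 + 2 * r1;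
         p1 = (\<lambda>i. if i = 0 then 0 else h + i);
         p2 = (\<lambda>i. if i = 0 then 0 else h + q1 + i)
     in {(i, Suc i) | i. i < h}
      \<union> {(p1 i, p1 (Suc i)) | i. i < q1}
      \<union> {(p2 i, p2 (Suc i)) | i. i < q2}
      \<union> {(v1, b1 + 2 * k) | k. k < r1} \<union> {(b1 + 2 * k, b1 + 2 * k + 1) | k. k < r1}
      \<union> {(v2, b2 + 2 * k) | k. k < r2} \<union> {(b2 + 2 * k, b2 + 2 * k + 1) | k. k < r2})"

definition tree_adj :: "nat \<Rightarrow> nat \<Rightarrow> nat \<Rightarrow> nat \<Rightarrow> nat \<Rightarrow> real mat" where
  "tree_adj r1 r2 h q1 q2 =
    mat (tree_order r1 r2 h q1 q2) (tree_order r1 r2 h q1 q2)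
      (\<lambda>(i, j). if (i, j) \<in> tree_edges r1 r2 h q1 q2 \<or> (j, i) \<in> tree_edges r1 r2 h q1 q2
                then 1 else 0)"

definition largest_eigenvalue :: "real mat \<Rightarrow> real" where
  "largest_eigenvalue A = Max {x. eigenvalue A x}"

text \<open>The sequence z_j(r), indexed from j = 1 (the value at index 0 is unused).\<close>
fun zseq :: "real \<Rightarrow> real \<Rightarrow> real \<Rightarrow> nat \<Rightarrow> real" where
  "zseq lam a2 r 0 = 0"
| "zseq lam a2 r (Suc 0) = - lam - r / a2"
| "zseq lam a2 r (Suc (Suc j)) = - lam - 1 / zseq lam a2 r (Suc j)"

end

theory Submission
  imports Defs
begin

text \<open>
  Write \<lambda> = q + 1/q with q > 1, so that \<theta> = -q.  The map z \<mapsto> -\<lambda> - 1/z is linearised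
  by a Moebius change of coordinates sending its fixed points \<theta> and 1/\<theta> to 0 and \<infinity>; this
  gives the closed form (a).  Since \<beta>(r) = (r - r^*)/(\<theta>^2 (r_* - r)), part (b) is elementary,
  and when \<beta>(r) > 0 the closed form shows at once that z_j is negative, decreasing and tends
  to \<theta>.  So (c) reduces to r_* < 2 \<le> r1 < r2 < r^*, and the only non-trivial inequality is
  r2 < r^* = q^2 + 1/(q^2 + 1), a lower bound for the spectral radius.

  That bound comes from explicit eigenvectors.  Along each branch at u an eigenvector for
  L = p + 1/p satisfies x_(k+1) = L x_k - x_(k-1) and is determined by its values at the far
  end; the three branches fit together at u exactly when a defect, polynomial in L,
  vanishes.  For the p_0 > 1 with p_0^2 + 1/(p_0^2 + 1) = r2 the branch at v2 decays exactly
  geometrically, which makes the defect positive, while it is negative for large p.  Hence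
  some p > p_0 yields an eigenvalue p + 1/p \<le> \<lambda>, and therefore q > p_0.
\<close>

section \<open>Three-term recurrences\<close>

fun cheb_seq :: "real \<Rightarrow> real \<Rightarrow> real \<Rightarrow> nat \<Rightarrow> real" where
  "cheb_seq L a b 0 = a"
| "cheb_seq L a b (Suc 0) = b"
| "cheb_seq L a b (Suc (Suc k)) = L * cheb_seq L a b (Suc k) - cheb_seq L a b k"

lemma cheb_seq_neighbours:
  assumes "1 \<le> m"
  shows "cheb_seq L a b (m + 1) + cheb_seq L a b (m - 1) = L * cheb_seq L a b m"
proof -
  obtain k where "m = Suc k" using assms by (cases m) auto
  then show ?thesis by simp
qed

lemma cheb_seq_pos_ratio:
  assumes p: "0 < p" "p + 1 / p \<le> L" and ab: "0 < a" "a \<le> p * b"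
  shows "0 < cheb_seq L a b k \<and> cheb_seq L a b k \<le> p * cheb_seq L a b (Suc k)"
proof (induction k)
  case 0
  then show ?case using ab by simp
next
  case (Suc k)
  let ?x = "cheb_seq L a b k" and ?y = "cheb_seq L a b (Suc k)"
  have x: "0 < ?x" "?x \<le> p * ?y" using Suc by auto
  then have y: "0 < ?y" using p by (metis order_less_le_trans zero_less_mult_pos)
  have "1 \<le> p * (L - p)"
    using mult_left_mono[OF p(2), of p] p(1) by (simp add: algebra_simps)
  then have "?y \<le> p * (L - p) * ?y" using y by simp
  also have "\<dots> = p * (L * ?y - p * ?y)" by (simp add: algebra_simps)
  also have "\<dots> \<le> p * (L * ?y - ?x)" using x p by (intro mult_left_mono) auto
  finally show ?case using y by simp
qed

lemma cheb_seq_geometric: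
  assumes "p \<noteq> 0" and "p + 1 / p = L" and "a = p * b"
  shows "cheb_seq L a b k = p * cheb_seq L a b (Suc k)"
proof (induction k)
  case 0
  then show ?case using assms(3) by simp
next
  case (Suc k)
  let ?y = "cheb_seq L a b (Suc k)"
  have "p * (L * ?y - p * ?y) = (p * L - p * p) * ?y" by (simp add: algebra_simps)
  also have "p * L - p * p = 1" using assms(1,2) by (auto simp: field_simps)
  finally show ?case using Suc by simp
qed

lemma cheb_seq_le_mult:
  assumes "0 \<le> cheb_seq L a b (m - 1)" and "1 \<le> m"
  shows "cheb_seq L a b (Suc m) \<le> L * cheb_seq L a b m"
  using cheb_seq_neighbours[OF assms(2), of L a b] assms(1) by simp

lemma continuous_on_cheb_seq [continuous_intros]:
  assumes "continuous_on S L" "continuous_on S A" "continuous_on S B"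
  shows "continuous_on S (\<lambda>x. cheb_seq (L x) (A x) (B x) k)"
proof -
  have "continuous_on S (\<lambda>x. cheb_seq (L x) (A x) (B x) k)
      \<and> continuous_on S (\<lambda>x. cheb_seq (L x) (A x) (B x) (Suc k))"
    by (induction k) (use assms in \<open>auto intro!: continuous_intros\<close>)
  then show ?thesis ..
qed

text \<open>
  An eigenvector for L on a path ending in a leaf, scaled to 1 at the leaf, takes the value
  pendant_seq L k at distance k from the leaf.  On a path ending in a vertex that carries r
  pendant paths of length 2 (with values L at their middle vertices and 1 at their leaves) it
  takes the value branch_seq L r k at distance k from that vertex.
\<close>

definition pendant_seq :: "real \<Rightarrow> nat \<Rightarrow> real" where
  "pendant_seq L = cheb_seq L 1 L"

definition branch_seq :: "real \<Rightarrow> real \<Rightarrow> nat \<Rightarrow> real" where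
  "branch_seq L r = cheb_seq L (L\<^sup>2 - 1) (L * (L\<^sup>2 - 1) - r * L)"

lemma pendant_seq_simps [simp]: "pendant_seq L 0 = 1" "pendant_seq L (Suc 0) = L"
  by (simp_all add: pendant_seq_def)

lemma branch_seq_simps [simp]:
  "branch_seq L r 0 = L\<^sup>2 - 1" "branch_seq L r (Suc 0) = L * (L\<^sup>2 - 1) - r * L"
  by (simp_all add: branch_seq_def)

lemma pendant_seq_neighbours:
  "1 \<le> m \<Longrightarrow> pendant_seq L (m + 1) + pendant_seq L (m - 1) = L * pendant_seq L m"
  unfolding pendant_seq_def by (rule cheb_seq_neighbours)

lemma branch_seq_neighbours:
  "1 \<le> m \<Longrightarrow> branch_seq L r (m + 1) + branch_seq L r (m - 1) = L * branch_seq L r m"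
  unfolding branch_seq_def by (rule cheb_seq_neighbours)

text \<open>
  Three branches meet at a root; on the one carrying the sequence x (of length a) the root has
  value x a and its neighbour x (a - 1), and likewise for y, b and z, c.  After scaling the
  branches to the common root value x a * y b * z c, the glued vector satisfies the eigenvalue
  equation at the root iff root_defect vanishes.
\<close>

definition root_defect ::
    "real \<Rightarrow> (nat \<Rightarrow> real) \<Rightarrow> nat \<Rightarrow> (nat \<Rightarrow> real) \<Rightarrow> nat \<Rightarrow> (nat \<Rightarrow> real) \<Rightarrow> nat \<Rightarrow> real" where
  "root_defect L x a y b z c =
     x (a - 1) * y b * z c + x a * y (b - 1) * z c + x a * y b * z (c - 1) - L * (x a * y b * z c)"

definition tree_defect :: "nat \<Rightarrow> nat \<Rightarrow> nat \<Rightarrow> nat \<Rightarrow> nat \<Rightarrow> real \<Rightarrow> real" where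
  "tree_defect r1 r2 h q1 q2 L = root_defect L (pendant_seq L) h (branch_seq L r1) q1 (branch_seq L r2) q2"

section \<open>Eigenvectors of the tree\<close>

lemma mem_path_edges:
  fixes s q :: nat
  defines "p \<equiv> \<lambda>i. if i = 0 then 0 else s + i"
  shows "(a, b) \<in> {(p i, p (Suc i)) | i. i < q}
    \<longleftrightarrow> (a = 0 \<and> b = s + 1 \<and> 0 < q) \<or> (s + 1 \<le> a \<and> a < s + q \<and> b = a + 1)"
proof
  assume "(a, b) \<in> {(p i, p (Suc i)) | i. i < q}"
  then obtain i where "i < q" "a = p i" "b = s + Suc i" unfolding p_def by auto
  then show "(a = 0 \<and> b = s + 1 \<and> 0 < q) \<or> (s + 1 \<le> a \<and> a < s + q \<and> b = a + 1)"
    unfolding p_def by (cases "i = 0") auto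
next
  assume "(a = 0 \<and> b = s + 1 \<and> 0 < q) \<or> (s + 1 \<le> a \<and> a < s + q \<and> b = a + 1)"
  then show "(a, b) \<in> {(p i, p (Suc i)) | i. i < q}"
    unfolding p_def by (elim disjE) (auto intro!: exI[of _ 0] exI[of _ "a - s"])
qed

lemma mem_star_edges:
  fixes a b c v r :: nat
  shows "(a, b) \<in> {(v, c + 2 * k) | k. k < r} \<longleftrightarrow> a = v \<and> c \<le> b \<and> b < c + 2 * r \<and> even (b - c)"
  by (auto intro!: exI[of _ "(b - c) div 2"])

lemma mem_matching_edges:
  fixes a b c r :: nat
  shows "(a, b) \<in> {(c + 2 * k, c + 2 * k + 1) | k. k < r} \<longleftrightarrow> c \<le> a \<and> a < c + 2 * r \<and> even (a - c) \<and> b = a + 1"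
  by (auto intro!: exI[of _ "(a - c) div 2"])

definition tree_adjacent :: "nat \<Rightarrow> nat \<Rightarrow> nat \<Rightarrow> nat \<Rightarrow> nat \<Rightarrow> nat \<Rightarrow> nat \<Rightarrow> bool" where
  "tree_adjacent r1 r2 h q1 q2 i j \<longleftrightarrow>
     (i, j) \<in> tree_edges r1 r2 h q1 q2 \<or> (j, i) \<in> tree_edges r1 r2 h q1 q2"

lemma eigenvalue_tree_adjI:
  fixes r1 r2 h q1 q2 :: nat and f :: "nat \<Rightarrow> real"
  defines "n \<equiv> tree_order r1 r2 h q1 q2"
  assumes eq: "\<And>i. i < n \<Longrightarrow> (\<Sum>j | j < n \<and> tree_adjacent r1 r2 h q1 q2 i j. f j) = l * f i"
    and "i0 < n" and "f i0 \<noteq> 0"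
  shows "eigenvalue (tree_adj r1 r2 h q1 q2) l"
proof -
  let ?A = "tree_adj r1 r2 h q1 q2" and ?v = "vec n f"
  have A: "?A \<in> carrier_mat n n" unfolding tree_adj_def n_def by simp
  have "?A *\<^sub>v ?v = l \<cdot>\<^sub>v ?v"
  proof (rule eq_vecI)
    fix i assume "i < dim_vec (l \<cdot>\<^sub>v ?v)"
    then have i: "i < n" by simp
    have "(?A *\<^sub>v ?v) $ i = (\<Sum>j = 0..<n. ?A $$ (i, j) * f j)"
      using A i by (simp add: scalar_prod_def)
    also have "\<dots> = (\<Sum>j = 0..<n. if tree_adjacent r1 r2 h q1 q2 i j then f j else 0)"
      using i unfolding tree_adj_def n_def tree_adjacent_def by (intro sum.cong) auto
    also have "\<dots> = (\<Sum>j | j < n \<and> tree_adjacent r1 r2 h q1 q2 i j. f j)"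
      by (subst sum.inter_filter[symmetric]) (auto intro: sum.cong)
    also have "\<dots> = l * f i" using eq[OF i] .
    finally show "(?A *\<^sub>v ?v) $ i = (l \<cdot>\<^sub>v ?v) $ i" using i by simp
  qed (use A in simp)
  moreover have "?v \<noteq> 0\<^sub>v n" using assms(3,4) by (metis index_vec index_zero_vec(1))
  ultimately show ?thesis unfolding eigenvalue_def eigenvector_def using A by (intro exI[of _ ?v]) auto
qed

text \<open>
  Each branch at u is scaled by the values of the other two branch sequences at u, so that all
  three agree there.
\<close>

definition tree_vector :: "nat \<Rightarrow> nat \<Rightarrow> nat \<Rightarrow> nat \<Rightarrow> nat \<Rightarrow> real \<Rightarrow> nat \<Rightarrow> real" where
  "tree_vector r1 r2 h q1 q2 l i =
    (let H = pendant_seq l; W = branch_seq l r1; V = branch_seq l r2 in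
     if i \<le> h then W q1 * V q2 * H (h - i)
     else if i \<le> h + q1 then H h * V q2 * W (q1 - (i - h))
     else if i \<le> h + q1 + q2 then H h * W q1 * V (q2 - (i - h - q1))
     else if i < h + q1 + q2 + 1 + 2 * r1 then
       (if even (i - (h + q1 + q2 + 1)) then H h * V q2 * l else H h * V q2)
     else (if even (i - (h + q1 + q2 + 1 + 2 * r1)) then H h * W q1 * l else H h * W q1))"

text \<open>
  Vertex classes in the lemma names: the pendant path of h edges at u, path1 and path2 from u
  to branch1 = v1 and branch2 = v2, and the middle vertex and the leaf of each pendant path of
  length 2 at v1 (suffix 1) or at v2 (suffix 2).
\<close>

locale tree_shape =
  fixes r1 r2 h q1 q2 :: nat
  assumes h: "2 \<le> h" and q1: "2 \<le> q1" and q2: "2 \<le> q2"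
begin

lemma tree_edges_iff:
  "(a, b) \<in> tree_edges r1 r2 h q1 q2 \<longleftrightarrow>
     (a < h \<and> b = a + 1)
   \<or> (a = 0 \<and> b = h + 1) \<or> (h + 1 \<le> a \<and> a < h + q1 \<and> b = a + 1)
   \<or> (a = 0 \<and> b = h + q1 + 1) \<or> (h + q1 + 1 \<le> a \<and> a < h + q1 + q2 \<and> b = a + 1)
   \<or> (a = h + q1 \<and> h + q1 + q2 + 1 \<le> b \<and> b < h + q1 + q2 + 1 + 2 * r1 \<and> even (b - (h + q1 + q2 + 1)))
   \<or> (h + q1 + q2 + 1 \<le> a \<and> a < h + q1 + q2 + 1 + 2 * r1 \<and> even (a - (h + q1 + q2 + 1)) \<and> b = a + 1)
   \<or> (a = h + q1 + q2 \<and> h + q1 + q2 + 1 + 2 * r1 \<le> b \<and> b < h + q1 + q2 + 1 + 2 * r1 + 2 * r2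
        \<and> even (b - (h + q1 + q2 + 1 + 2 * r1)))
   \<or> (h + q1 + q2 + 1 + 2 * r1 \<le> a \<and> a < h + q1 + q2 + 1 + 2 * r1 + 2 * r2
        \<and> even (a - (h + q1 + q2 + 1 + 2 * r1)) \<and> b = a + 1)"
  using q1 q2 unfolding tree_edges_def Let_def Un_iff mem_star_edges mem_matching_edges
    mem_path_edges[of a b h q1] mem_path_edges[of a b "h + q1" q2]
  by (auto simp: add.assoc)

abbreviation "adj \<equiv> tree_adjacent r1 r2 h q1 q2"

lemma adjacent_root: "adj 0 j \<longleftrightarrow> j = 1 \<or> j = h + 1 \<or> j = h + q1 + 1"
  using h q1 q2 unfolding tree_adjacent_def tree_edges_iff
  by (intro iffI; (elim disjE conjE)?; (simp; fail)?; presburger)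

lemma adjacent_pendant_path:
  "1 \<le> i \<Longrightarrow> i < h \<Longrightarrow> adj i j \<longleftrightarrow> j + 1 = i \<or> j = i + 1"
  using h q1 q2 unfolding tree_adjacent_def tree_edges_iff
  by (intro iffI; (elim disjE conjE)?; (simp; fail)?; presburger)

lemma adjacent_pendant_leaf: "adj h j \<longleftrightarrow> j + 1 = h"
  using h q1 q2 unfolding tree_adjacent_def tree_edges_iff
  by (intro iffI; (elim disjE conjE)?; (simp; fail)?; presburger)

lemma adjacent_path1:
  "1 \<le> k \<Longrightarrow> k < q1 \<Longrightarrow>
   adj (h + k) j \<longleftrightarrow> (k = 1 \<and> j = 0) \<or> (k \<noteq> 1 \<and> j + 1 = h + k) \<or> j = h + k + 1"
  using h q1 q2 unfolding tree_adjacent_def tree_edges_iff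
  by (intro iffI; (elim disjE conjE)?; (simp; fail)?; presburger)

lemma adjacent_path2:
  "1 \<le> k \<Longrightarrow> k < q2 \<Longrightarrow>
   adj (h + q1 + k) j \<longleftrightarrow> (k = 1 \<and> j = 0) \<or> (k \<noteq> 1 \<and> j + 1 = h + q1 + k) \<or> j = h + q1 + k + 1"
  using h q1 q2 unfolding tree_adjacent_def tree_edges_iff
  by (intro iffI; (elim disjE conjE)?; (simp; fail)?; presburger)

lemma adjacent_branch1:
  "adj (h + q1) j \<longleftrightarrow> j + 1 = h + q1
     \<or> (h + q1 + q2 + 1 \<le> j \<and> j < h + q1 + q2 + 1 + 2 * r1 \<and> even (j - (h + q1 + q2 + 1)))"
  using h q1 q2 unfolding tree_adjacent_def tree_edges_iff
  by (intro iffI; (elim disjE conjE)?; (simp; fail)?; presburger)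

lemma adjacent_branch2:
  "adj (h + q1 + q2) j \<longleftrightarrow> j + 1 = h + q1 + q2
     \<or> (h + q1 + q2 + 1 + 2 * r1 \<le> j \<and> j < h + q1 + q2 + 1 + 2 * r1 + 2 * r2
         \<and> even (j - (h + q1 + q2 + 1 + 2 * r1)))"
  using h q1 q2 unfolding tree_adjacent_def tree_edges_iff
  by (intro iffI; (elim disjE conjE)?; (simp; fail)?; presburger)

lemma adjacent_middle1:
  "k < r1 \<Longrightarrow> adj (h + q1 + q2 + 1 + 2 * k) j \<longleftrightarrow> j = h + q1 \<or> j = h + q1 + q2 + 1 + 2 * k + 1"
  using h q1 q2 unfolding tree_adjacent_def tree_edges_iff
  by (intro iffI; (elim disjE conjE)?; (simp; fail)?; presburger)

lemma adjacent_leaf1: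
  "k < r1 \<Longrightarrow> adj (h + q1 + q2 + 1 + 2 * k + 1) j \<longleftrightarrow> j = h + q1 + q2 + 1 + 2 * k"
  using h q1 q2 unfolding tree_adjacent_def tree_edges_iff
  by (intro iffI; (elim disjE conjE)?; (simp; fail)?; presburger)

lemma adjacent_middle2:
  "k < r2 \<Longrightarrow>
   adj (h + q1 + q2 + 1 + 2 * r1 + 2 * k) j \<longleftrightarrow> j = h + q1 + q2 \<or> j = h + q1 + q2 + 1 + 2 * r1 + 2 * k + 1"
  using h q1 q2 unfolding tree_adjacent_def tree_edges_iff
  by (intro iffI; (elim disjE conjE)?; (simp; fail)?; presburger)

lemma adjacent_leaf2:
  "k < r2 \<Longrightarrow> adj (h + q1 + q2 + 1 + 2 * r1 + 2 * k + 1) j \<longleftrightarrow> j = h + q1 + q2 + 1 + 2 * r1 + 2 * k"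
  using h q1 q2 unfolding tree_adjacent_def tree_edges_iff
  by (intro iffI; (elim disjE conjE)?; (simp; fail)?; presburger)

abbreviation "n \<equiv> tree_order r1 r2 h q1 q2"

lemma neighbours_branch1:
  "{j. j < n \<and> adj (h + q1) j} = insert (h + q1 - 1) ((\<lambda>k. h + q1 + q2 + 1 + 2 * k) ` {..<r1})"
    (is "_ = insert _ (?m ` _)")
proof (intro equalityI subsetI)
  fix j assume "j \<in> {j. j < n \<and> adj (h + q1) j}"
  then have "j + 1 = h + q1 \<or> (?m 0 \<le> j \<and> j < ?m r1 \<and> even (j - ?m 0))"
    by (simp add: adjacent_branch1)
  then show "j \<in> insert (h + q1 - 1) (?m ` {..<r1})"
  proof
    assume j: "?m 0 \<le> j \<and> j < ?m r1 \<and> even (j - ?m 0)"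
    then have "even (j - ?m 0)" by blast
    then obtain k where "j - ?m 0 = 2 * k" by (rule evenE)
    with j show ?thesis by (auto intro!: image_eqI[of _ _ k])
  qed auto
qed (use h q1 in \<open>auto simp: adjacent_branch1 tree_order_def\<close>)

lemma neighbours_branch2:
  "{j. j < n \<and> adj (h + q1 + q2) j} = insert (h + q1 + q2 - 1) ((\<lambda>k. h + q1 + q2 + 1 + 2 * r1 + 2 * k) ` {..<r2})"
    (is "_ = insert _ (?m ` _)")
proof (intro equalityI subsetI)
  fix j assume "j \<in> {j. j < n \<and> adj (h + q1 + q2) j}"
  then have "j + 1 = h + q1 + q2 \<or> (?m 0 \<le> j \<and> j < ?m r2 \<and> even (j - ?m 0))"
    by (simp add: adjacent_branch2)
  then show "j \<in> insert (h + q1 + q2 - 1) (?m ` {..<r2})"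
  proof
    assume j: "?m 0 \<le> j \<and> j < ?m r2 \<and> even (j - ?m 0)"
    then have "even (j - ?m 0)" by blast
    then obtain k where "j - ?m 0 = 2 * k" by (rule evenE)
    with j show ?thesis by (auto intro!: image_eqI[of _ _ k])
  qed auto
qed (use h q1 q2 in \<open>auto simp: adjacent_branch2 tree_order_def\<close>)

context
  fixes l :: real
begin

abbreviation "f \<equiv> tree_vector r1 r2 h q1 q2 l"
abbreviation "H \<equiv> pendant_seq l"
abbreviation "W \<equiv> branch_seq l r1"
abbreviation "V \<equiv> branch_seq l r2"

lemma tree_vector_pendant: "i \<le> h \<Longrightarrow> f i = W q1 * V q2 * H (h - i)"
  unfolding tree_vector_def by simp

lemma tree_vector_path1: "h < i \<Longrightarrow> i \<le> h + q1 \<Longrightarrow> f i = H h * V q2 * W (q1 - (i - h))"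
  unfolding tree_vector_def by simp

lemma tree_vector_path2:
  "h + q1 < i \<Longrightarrow> i \<le> h + q1 + q2 \<Longrightarrow> f i = H h * W q1 * V (q2 - (i - h - q1))"
  unfolding tree_vector_def by simp

lemma tree_vector_middle1: "k < r1 \<Longrightarrow> f (h + q1 + q2 + 1 + 2 * k) = H h * V q2 * l"
  unfolding tree_vector_def by simp

lemma tree_vector_leaf1: "k < r1 \<Longrightarrow> f (h + q1 + q2 + 1 + 2 * k + 1) = H h * V q2"
  unfolding tree_vector_def by simp

lemma tree_vector_middle2: "k < r2 \<Longrightarrow> f (h + q1 + q2 + 1 + 2 * r1 + 2 * k) = H h * W q1 * l"
  unfolding tree_vector_def by simp

lemma tree_vector_leaf2: "k < r2 \<Longrightarrow> f (h + q1 + q2 + 1 + 2 * r1 + 2 * k + 1) = H h * W q1"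
  unfolding tree_vector_def by simp

lemma neighbour_sum_root:
  "(\<Sum>j | j < n \<and> adj 0 j. f j) = l * f 0 + tree_defect r1 r2 h q1 q2 l"
proof -
  have "{j. j < n \<and> adj 0 j} = {1, h + 1, h + q1 + 1}"
    using h q1 q2 by (auto simp: adjacent_root tree_order_def)
  then have "(\<Sum>j | j < n \<and> adj 0 j. f j) = f 1 + f (h + 1) + f (h + q1 + 1)"
    using h q1 by simp
  also have "\<dots> = l * f 0 + tree_defect r1 r2 h q1 q2 l"
    using h q1 q2
    by (simp add: tree_vector_pendant tree_vector_path1 tree_vector_path2 tree_defect_def root_defect_def)
  finally show ?thesis .
qed

lemma neighbour_sum_pendant_path:
  assumes "1 \<le> i" "i < h"
  shows "(\<Sum>j | j < n \<and> adj i j. f j) = l * f i"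
proof -
  have "{j. j < n \<and> adj i j} = {i - 1, i + 1}"
    using assms by (auto simp: adjacent_pendant_path tree_order_def)
  then have "(\<Sum>j | j < n \<and> adj i j. f j) = f (i - 1) + f (i + 1)" using assms by simp
  also have "\<dots> = W q1 * V q2 * (H (h - i + 1) + H (h - i - 1))"
    using assms by (simp add: tree_vector_pendant algebra_simps Suc_diff_le)
  also have "\<dots> = l * f i" using assms pendant_seq_neighbours[of "h - i"] by (simp add: tree_vector_pendant)
  finally show ?thesis .
qed

lemma neighbour_sum_pendant_leaf: "(\<Sum>j | j < n \<and> adj h j. f j) = l * f h"
proof -
  have "{j. j < n \<and> adj h j} = {h - 1}"
    using h by (auto simp: adjacent_pendant_leaf tree_order_def)
  then have "(\<Sum>j | j < n \<and> adj h j. f j) = f (h - 1)" by simp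
  also have "\<dots> = W q1 * V q2 * l" using h by (simp add: tree_vector_pendant)
  also have "\<dots> = l * f h" by (simp add: tree_vector_pendant)
  finally show ?thesis .
qed

lemma neighbour_sum_path1:
  assumes "1 \<le> k" "k < q1"
  shows "(\<Sum>j | j < n \<and> adj (h + k) j. f j) = l * f (h + k)"
proof -
  have "{j. j < n \<and> adj (h + k) j} = {if k = 1 then 0 else h + k - 1, h + k + 1}"
    using assms by (auto simp: adjacent_path1 tree_order_def)
  then have "(\<Sum>j | j < n \<and> adj (h + k) j. f j) = f (if k = 1 then 0 else h + k - 1) + f (h + k + 1)"
    using assms by simp
  also have "\<dots> = H h * V q2 * (W (q1 - k + 1) + W (q1 - k - 1))"
    using assms
    by (cases "k = 1") (simp_all add: tree_vector_pendant tree_vector_path1 algebra_simps Suc_diff_le)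
  also have "\<dots> = l * f (h + k)"
    using assms branch_seq_neighbours[of "q1 - k"] by (simp add: tree_vector_path1)
  finally show ?thesis .
qed

lemma neighbour_sum_path2:
  assumes "1 \<le> k" "k < q2"
  shows "(\<Sum>j | j < n \<and> adj (h + q1 + k) j. f j) = l * f (h + q1 + k)"
proof -
  have "{j. j < n \<and> adj (h + q1 + k) j} = {if k = 1 then 0 else h + q1 + k - 1, h + q1 + k + 1}"
    using assms by (auto simp: adjacent_path2 tree_order_def)
  then have "(\<Sum>j | j < n \<and> adj (h + q1 + k) j. f j)
      = f (if k = 1 then 0 else h + q1 + k - 1) + f (h + q1 + k + 1)"
    using assms by simp
  also have "\<dots> = H h * W q1 * (V (q2 - k + 1) + V (q2 - k - 1))"
    using assms
    by (cases "k = 1") (simp_all add: tree_vector_pendant tree_vector_path2 algebra_simps Suc_diff_le)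
  also have "\<dots> = l * f (h + q1 + k)"
    using assms branch_seq_neighbours[of "q2 - k"] by (simp add: tree_vector_path2)
  finally show ?thesis .
qed

lemma neighbour_sum_middle1:
  assumes "k < r1"
  shows "(\<Sum>j | j < n \<and> adj (h + q1 + q2 + 1 + 2 * k) j. f j) = l * f (h + q1 + q2 + 1 + 2 * k)"
proof -
  have "{j. j < n \<and> adj (h + q1 + q2 + 1 + 2 * k) j} = {h + q1, h + q1 + q2 + 1 + 2 * k + 1}"
    using adjacent_middle1 assms unfolding tree_order_def by auto
  then have "(\<Sum>j | j < n \<and> adj (h + q1 + q2 + 1 + 2 * k) j. f j)
      = f (h + q1) + f (h + q1 + q2 + 1 + 2 * k + 1)"
    by simp
  also have "\<dots> = l * f (h + q1 + q2 + 1 + 2 * k)"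
    unfolding tree_vector_middle1[OF assms] tree_vector_leaf1[OF assms]
    using h q1 by (simp add: tree_vector_path1 power2_eq_square algebra_simps)
  finally show ?thesis .
qed

lemma neighbour_sum_leaf1:
  assumes "k < r1"
  shows "(\<Sum>j | j < n \<and> adj (h + q1 + q2 + 1 + 2 * k + 1) j. f j) = l * f (h + q1 + q2 + 1 + 2 * k + 1)"
proof -
  have "{j. j < n \<and> adj (h + q1 + q2 + 1 + 2 * k + 1) j} = {h + q1 + q2 + 1 + 2 * k}"
    using adjacent_leaf1 assms unfolding tree_order_def by auto
  then have "(\<Sum>j | j < n \<and> adj (h + q1 + q2 + 1 + 2 * k + 1) j. f j) = f (h + q1 + q2 + 1 + 2 * k)"
    by simp
  then show ?thesis unfolding tree_vector_middle1[OF assms] tree_vector_leaf1[OF assms] by simp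
qed

lemma neighbour_sum_middle2:
  assumes "k < r2"
  shows "(\<Sum>j | j < n \<and> adj (h + q1 + q2 + 1 + 2 * r1 + 2 * k) j. f j)
    = l * f (h + q1 + q2 + 1 + 2 * r1 + 2 * k)"
proof -
  have "{j. j < n \<and> adj (h + q1 + q2 + 1 + 2 * r1 + 2 * k) j}
      = {h + q1 + q2, h + q1 + q2 + 1 + 2 * r1 + 2 * k + 1}"
    using adjacent_middle2 assms unfolding tree_order_def by auto
  then have "(\<Sum>j | j < n \<and> adj (h + q1 + q2 + 1 + 2 * r1 + 2 * k) j. f j)
      = f (h + q1 + q2) + f (h + q1 + q2 + 1 + 2 * r1 + 2 * k + 1)"
    by simp
  also have "\<dots> = l * f (h + q1 + q2 + 1 + 2 * r1 + 2 * k)"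
    unfolding tree_vector_middle2[OF assms] tree_vector_leaf2[OF assms]
    using h q1 q2 by (simp add: tree_vector_path2 power2_eq_square algebra_simps)
  finally show ?thesis .
qed

lemma neighbour_sum_leaf2:
  assumes "k < r2"
  shows "(\<Sum>j | j < n \<and> adj (h + q1 + q2 + 1 + 2 * r1 + 2 * k + 1) j. f j)
    = l * f (h + q1 + q2 + 1 + 2 * r1 + 2 * k + 1)"
proof -
  have "{j. j < n \<and> adj (h + q1 + q2 + 1 + 2 * r1 + 2 * k + 1) j} = {h + q1 + q2 + 1 + 2 * r1 + 2 * k}"
    using adjacent_leaf2 assms unfolding tree_order_def by auto
  then have "(\<Sum>j | j < n \<and> adj (h + q1 + q2 + 1 + 2 * r1 + 2 * k + 1) j. f j)
      = f (h + q1 + q2 + 1 + 2 * r1 + 2 * k)"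
    by simp
  then show ?thesis unfolding tree_vector_middle2[OF assms] tree_vector_leaf2[OF assms] by simp
qed

lemma neighbour_sum_branch1: "(\<Sum>j | j < n \<and> adj (h + q1) j. f j) = l * f (h + q1)"
proof -
  let ?m = "\<lambda>k. h + q1 + q2 + 1 + 2 * k"
  have "h + q1 - 1 \<notin> ?m ` {..<r1}" and "inj_on ?m {..<r1}" by (auto simp: inj_on_def)
  with neighbours_branch1 have "(\<Sum>j | j < n \<and> adj (h + q1) j. f j)
      = f (h + q1 - 1) + (\<Sum>k<r1. f (?m k))"
    by (simp add: sum.reindex)
  also have "(\<Sum>k<r1. f (?m k)) = (\<Sum>k<r1. H h * V q2 * l)"
    by (intro sum.cong refl tree_vector_middle1) simp
  also have "f (h + q1 - 1) + (\<Sum>k<r1. H h * V q2 * l) = H h * V q2 * W 1 + r1 * (H h * V q2 * l)"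
    using h q1 by (simp add: tree_vector_path1)
  also have "\<dots> = l * f (h + q1)"
    using q1 by (simp add: tree_vector_path1 algebra_simps)
  finally show ?thesis .
qed

lemma neighbour_sum_branch2: "(\<Sum>j | j < n \<and> adj (h + q1 + q2) j. f j) = l * f (h + q1 + q2)"
proof -
  let ?m = "\<lambda>k. h + q1 + q2 + 1 + 2 * r1 + 2 * k"
  have "h + q1 + q2 - 1 \<notin> ?m ` {..<r2}" and "inj_on ?m {..<r2}" by (auto simp: inj_on_def)
  with neighbours_branch2 have "(\<Sum>j | j < n \<and> adj (h + q1 + q2) j. f j)
      = f (h + q1 + q2 - 1) + (\<Sum>k<r2. f (?m k))"
    by (simp add: sum.reindex)
  also have "(\<Sum>k<r2. f (?m k)) = (\<Sum>k<r2. H h * W q1 * l)"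
    by (intro sum.cong refl tree_vector_middle2) simp
  also have "f (h + q1 + q2 - 1) + (\<Sum>k<r2. H h * W q1 * l) = H h * W q1 * V 1 + r2 * (H h * W q1 * l)"
    using h q1 q2 by (simp add: tree_vector_path2)
  also have "\<dots> = l * f (h + q1 + q2)"
    using q2 by (simp add: tree_vector_path2 algebra_simps)
  finally show ?thesis .
qed

lemma neighbour_sum_legs1:
  assumes "h + q1 + q2 < i" and "i < h + q1 + q2 + 1 + 2 * r1"
  shows "(\<Sum>j | j < n \<and> adj i j. f j) = l * f i"
proof -
  define k where "k = (i - (h + q1 + q2 + 1)) div 2"
  have k: "k < r1" using assms unfolding k_def by auto
  show ?thesis
  proof (cases "even (i - (h + q1 + q2 + 1))")
    case True
    then have "i = h + q1 + q2 + 1 + 2 * k" using assms unfolding k_def by auto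
    then show ?thesis using neighbour_sum_middle1[OF k] by simp
  next
    case False
    then have "i = h + q1 + q2 + 1 + 2 * k + 1" using assms unfolding k_def by presburger
    then show ?thesis using neighbour_sum_leaf1[OF k] by simp
  qed
qed

lemma neighbour_sum_legs2:
  assumes "h + q1 + q2 + 1 + 2 * r1 \<le> i" and "i < n"
  shows "(\<Sum>j | j < n \<and> adj i j. f j) = l * f i"
proof -
  define k where "k = (i - (h + q1 + q2 + 1 + 2 * r1)) div 2"
  have k: "k < r2" using assms unfolding k_def tree_order_def by auto
  show ?thesis
  proof (cases "even (i - (h + q1 + q2 + 1 + 2 * r1))")
    case True
    then have "i = h + q1 + q2 + 1 + 2 * r1 + 2 * k" using assms unfolding k_def by auto
    then show ?thesis using neighbour_sum_middle2[OF k] by simp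
  next
    case False
    then have "i = h + q1 + q2 + 1 + 2 * r1 + 2 * k + 1" using assms unfolding k_def by presburger
    then show ?thesis using neighbour_sum_leaf2[OF k] by simp
  qed
qed

lemma neighbour_sum_if_tree_defect_zero:
  assumes defect: "tree_defect r1 r2 h q1 q2 l = 0" and i: "i < n"
  shows "(\<Sum>j | j < n \<and> adj i j. f j) = l * f i"
proof -
  consider "i = 0" | "1 \<le> i \<and> i < h" | "i = h" | "h < i \<and> i < h + q1" | "i = h + q1"
    | "h + q1 < i \<and> i < h + q1 + q2" | "i = h + q1 + q2"
    | "h + q1 + q2 < i \<and> i < h + q1 + q2 + 1 + 2 * r1" | "h + q1 + q2 + 1 + 2 * r1 \<le> i"
    by linarith
  then show ?thesis
  proof cases
    case 1
    then show ?thesis using neighbour_sum_root defect by simp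
  next
    case 2
    then show ?thesis using neighbour_sum_pendant_path by blast
  next
    case 3
    then show ?thesis using neighbour_sum_pendant_leaf by simp
  next
    case 4
    then have "1 \<le> i - h" "i - h < q1" by auto
    then show ?thesis using neighbour_sum_path1[of "i - h"] 4 by simp
  next
    case 5
    then show ?thesis using neighbour_sum_branch1 by simp
  next
    case 6
    then have "1 \<le> i - h - q1" "i - h - q1 < q2" by auto
    then show ?thesis using neighbour_sum_path2[of "i - h - q1"] 6 by simp
  next
    case 7
    then show ?thesis using neighbour_sum_branch2 by simp
  next
    case 8
    then show ?thesis using neighbour_sum_legs1 by blast
  next
    case 9
    then show ?thesis using neighbour_sum_legs2 i by blast
  qed
qed

lemma eigenvalue_tree_adj_if_tree_defect_zero:
  assumes "tree_defect r1 r2 h q1 q2 l = 0" and nonzero: "W q1 * V q2 \<noteq> 0"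
  shows "eigenvalue (tree_adj r1 r2 h q1 q2) l"
proof (rule eigenvalue_tree_adjI[where f = f and ?i0.0 = h])
  show "h < n" unfolding tree_order_def by simp
  show "f h \<noteq> 0" using nonzero by (simp add: tree_vector_pendant)
qed (rule neighbour_sum_if_tree_defect_zero[OF assms(1)])

end

end

section \<open>A lower bound for the spectral radius\<close>

lemma square_plus_one_pos: "0 < (x :: real)\<^sup>2 + 1"
  using zero_le_power2[of x] by linarith

lemma sum_inverse_strict_mono:
  fixes a b :: real
  assumes "1 \<le> a" and "a < b"
  shows "a + 1 / a < b + 1 / b"
proof -
  have "1 * b \<le> a * b" using assms by (intro mult_right_mono) auto
  then have "1 < a * b" using assms by linarith
  have "1 / a - 1 / b = (b - a) / (a * b)" using assms by (simp add: field_simps)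
  also have "\<dots> < b - a"
    using \<open>1 < a * b\<close> assms mult_strict_left_mono[of 1 "a * b" "b - a"] by (simp add: pos_divide_less_eq)
  finally show ?thesis by simp
qed

lemma sum_inverse_le_imp_le:
  fixes a b :: real
  assumes "1 \<le> a" and "1 \<le> b" and "a + 1 / a \<le> b + 1 / b"
  shows "a \<le> b"
  using sum_inverse_strict_mono[of b a] assms by (cases "a \<le> b") auto

lemma sum_inverse_surj:
  fixes x :: real
  assumes "2 \<le> x"
  obtains q where "1 \<le> q" and "x = q + 1 / q"
proof
  define s where "s = sqrt (x\<^sup>2 - 4)"
  have "2 * 2 \<le> x * x" using assms by (intro mult_mono) auto
  then have s: "0 \<le> s" "s * s = x * x - 4" unfolding s_def by (simp_all add: power2_eq_square)
  show "1 \<le> (x + s) / 2" using assms s by simp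
  then show "x = (x + s) / 2 + 1 / ((x + s) / 2)" using s by (simp add: field_simps)
qed

lemma sum_inverse_discriminant:
  fixes q :: real
  assumes "1 \<le> q"
  shows "sqrt ((q + 1 / q)\<^sup>2 - 4) = q - 1 / q"
proof -
  have "(q + 1 / q)\<^sup>2 - 4 = (q - 1 / q)\<^sup>2" using assms by (simp add: power2_eq_square field_simps)
  moreover have "1 / q \<le> q" using assms by (smt (verit) divide_le_eq_1_pos)
  ultimately show ?thesis by simp
qed

text \<open>
  For L = q + 1/q the quantity q^2 + 1/(q^2 + 1) is the number of pendant paths at a branch
  vertex for which the branch sequence decays exactly like q^-k (branch_seq_geometric); it is
  the root r^* of \<beta> in the theorem.
\<close>

lemma threshold_eq:
  fixes q L :: real
  assumes "0 < q" and "L = q + 1 / q"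
  shows "q * (L\<^sup>2 - 1) / L = q\<^sup>2 + 1 / (q\<^sup>2 + 1)"
proof -
  have q2: "1 + q * q \<noteq> 0" "q * q + q * (q * (q * q)) \<noteq> 0"
    using assms(1) by (smt (verit) mult_pos_pos)+
  have L: "L = (q * q + 1) / q" using assms by (simp add: field_simps)
  show ?thesis unfolding L using assms(1) q2 by (simp add: field_simps power2_eq_square)
qed

lemma threshold_strict_mono:
  fixes s t :: real
  assumes "0 < s" and "s < t"
  shows "s\<^sup>2 + 1 / (s\<^sup>2 + 1) < t\<^sup>2 + 1 / (t\<^sup>2 + 1)"
proof -
  have "s\<^sup>2 < t\<^sup>2" using assms by (intro power_strict_mono) auto
  then have "(s\<^sup>2 + 1) + 1 / (s\<^sup>2 + 1) < (t\<^sup>2 + 1) + 1 / (t\<^sup>2 + 1)"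
    by (intro sum_inverse_strict_mono) auto
  then show ?thesis by simp
qed

lemma threshold_surj:
  fixes r :: real
  assumes "2 \<le> r"
  obtains q where "1 < q" and "q\<^sup>2 + 1 / (q\<^sup>2 + 1) = r"
proof -
  have cont: "continuous_on {1..r} (\<lambda>q. q\<^sup>2 + 1 / (q\<^sup>2 + 1))"
    using square_plus_one_pos by (intro continuous_intros) (auto simp: less_imp_neq[symmetric])
  have "r \<le> r\<^sup>2" using assms by (simp add: power2_eq_square)
  moreover have "0 < 1 / (r\<^sup>2 + 1)" using square_plus_one_pos[of r] by simp
  ultimately have hi: "r \<le> r\<^sup>2 + 1 / (r\<^sup>2 + 1)" by linarith
  have lo: "1\<^sup>2 + 1 / (1\<^sup>2 + 1) \<le> r" using assms by simp
  obtain q where q: "1 \<le> q" "q\<^sup>2 + 1 / (q\<^sup>2 + 1) = r"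
    using IVT'[OF lo hi _ cont] assms by auto
  moreover have "q \<noteq> 1" using q assms by auto
  ultimately show ?thesis using that by force
qed

lemma pendant_seq_pos_ratio:
  assumes "0 < q" and "L = q + 1 / q"
  shows "0 < pendant_seq L k \<and> pendant_seq L k \<le> q * pendant_seq L (Suc k)"
  unfolding pendant_seq_def using assms by (intro cheb_seq_pos_ratio) (auto simp: field_simps)

lemma branch_seq_pos_ratio:
  assumes q: "1 < q" and L: "L = q + 1 / q" and r: "r \<le> q\<^sup>2 + 1 / (q\<^sup>2 + 1)"
  shows "0 < branch_seq L r k \<and> branch_seq L r k \<le> q * branch_seq L r (Suc k)"
  unfolding branch_seq_def
proof (rule cheb_seq_pos_ratio)
  have "0 < 1 / q" using q by simp
  then have "1 < L" using q L by linarith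
  show "0 < q" "q + 1 / q \<le> L" using q L by auto
  show "0 < L\<^sup>2 - 1" using \<open>1 < L\<close> by (simp add: power2_eq_square less_1_mult)
  have "r \<le> q * (L\<^sup>2 - 1) / L" using r threshold_eq[OF _ L] q by simp
  then have "r * L \<le> q * (L\<^sup>2 - 1)" using \<open>1 < L\<close> by (simp add: pos_le_divide_eq)
  have "L\<^sup>2 - 1 = q * (L - q) * (L\<^sup>2 - 1)" using q L by (simp add: field_simps)
  also have "\<dots> = q * (L * (L\<^sup>2 - 1)) - q * (q * (L\<^sup>2 - 1))" by (simp add: algebra_simps)
  also have "\<dots> \<le> q * (L * (L\<^sup>2 - 1)) - q * (r * L)"
    using \<open>r * L \<le> q * (L\<^sup>2 - 1)\<close> q by simp
  also have "\<dots> = q * (L * (L\<^sup>2 - 1) - r * L)" by (simp add: algebra_simps)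
  finally show "L\<^sup>2 - 1 \<le> q * (L * (L\<^sup>2 - 1) - r * L)" .
qed

lemma branch_seq_geometric:
  assumes q: "1 < q" and L: "L = q + 1 / q" and r: "r = q\<^sup>2 + 1 / (q\<^sup>2 + 1)"
  shows "branch_seq L r k = q * branch_seq L r (Suc k)"
  unfolding branch_seq_def
proof (rule cheb_seq_geometric)
  show "q \<noteq> 0" "q + 1 / q = L" using q L by auto
  have "0 < L" using q L by (simp add: add_pos_pos)
  then have rL: "r * L = q * (L\<^sup>2 - 1)" using threshold_eq[OF _ L] q r by (simp add: field_simps)
  have "L\<^sup>2 - 1 = q * (L - q) * (L\<^sup>2 - 1)" using q L by (simp add: field_simps)
  also have "\<dots> = q * (L * (L\<^sup>2 - 1) - r * L)" unfolding rL by (simp add: algebra_simps)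
  finally show "L\<^sup>2 - 1 = q * (L * (L\<^sup>2 - 1) - r * L)" .
qed

lemma pendant_seq_mono:
  assumes "2 \<le> L"
  shows "0 < pendant_seq L k \<and> pendant_seq L k \<le> pendant_seq L (Suc k)"
  using cheb_seq_pos_ratio[of 1 L 1 L k] assms unfolding pendant_seq_def by simp

lemma branch_seq_mono:
  assumes L: "2 \<le> L" and r: "r \<le> L - 1"
  shows "0 < branch_seq L r k \<and> branch_seq L r k \<le> branch_seq L r (Suc k)"
proof -
  have "2 * L \<le> L * L" using L by (intro mult_right_mono) auto
  then have LL: "L \<le> L\<^sup>2 - 1" using L unfolding power2_eq_square by linarith
  have "r * L \<le> (L - 1) * L" using r L by (intro mult_right_mono) auto
  also have "\<dots> \<le> (L - 1) * (L\<^sup>2 - 1)" using LL L by (intro mult_left_mono) auto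
  finally have "L\<^sup>2 - 1 \<le> 1 * (L * (L\<^sup>2 - 1) - r * L)" by (simp add: algebra_simps)
  moreover have "0 < L\<^sup>2 - 1" using LL L by simp
  ultimately show ?thesis
    using cheb_seq_pos_ratio[of 1 L] L unfolding branch_seq_def by simp
qed

lemma root_defect_pos:
  assumes q: "1 < q" and L: "L = q + 1 / q"
    and pos: "0 < x a" "0 < y b" "0 < z c"
    and x: "x a \<le> L * x (a - 1)" and y: "y b \<le> L * y (b - 1)" and z: "z (c - 1) = q * z c"
  shows "0 < root_defect L x a y b z c"
proof -
  define P where "P = x a * y b * z c"
  have "0 < P" using pos unfolding P_def by simp
  have "0 < L" using q L by (simp add: add_pos_pos)
  have "(L - q) * L = L / q" using L by simp
  also have "\<dots> < 2"
  proof -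
    have "1 / q < q" using q by (smt (verit) divide_less_eq_1_pos)
    then show ?thesis using q L by (subst pos_divide_less_eq) auto
  qed
  finally have "0 < P * (2 - (L - q) * L)" using \<open>0 < P\<close> by simp
  also have "P * (2 - (L - q) * L) = y b * z c * x a + x a * z c * y b + (q - L) * L * P"
    unfolding P_def by (simp add: algebra_simps)
  also have "\<dots> \<le> y b * z c * (L * x (a - 1)) + x a * z c * (L * y (b - 1)) + (q - L) * L * P"
    using x y pos by (intro add_mono order_refl mult_left_mono) auto
  also have "\<dots> = L * root_defect L x a y b z c"
    unfolding root_defect_def z P_def by (simp add: algebra_simps)
  finally show ?thesis using \<open>0 < L\<close> by (simp add: zero_less_mult_iff)
qed

lemma root_defect_neg:
  assumes L: "3 < L"
    and pos: "0 < x a" "0 < y b" "0 < z c"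
    and x: "x (a - 1) \<le> x a" and y: "y (b - 1) \<le> y b" and z: "z (c - 1) \<le> z c"
  shows "root_defect L x a y b z c < 0"
proof -
  define P where "P = x a * y b * z c"
  have "root_defect L x a y b z c
      = y b * z c * x (a - 1) + x a * z c * y (b - 1) + x a * y b * z (c - 1) - L * P"
    unfolding root_defect_def P_def by (simp add: algebra_simps)
  also have "\<dots> \<le> y b * z c * x a + x a * z c * y b + x a * y b * z c - L * P"
    using x y z pos by (intro diff_right_mono add_mono mult_left_mono) auto
  also have "\<dots> = (3 - L) * P" unfolding P_def by (simp add: algebra_simps)
  also have "\<dots> < 0" using L pos unfolding P_def by (intro mult_neg_pos) auto
  finally show ?thesis .
qed

lemma continuous_on_tree_defect [continuous_intros]:
  "continuous_on S f \<Longrightarrow> continuous_on S (\<lambda>x. tree_defect r1 r2 h q1 q2 (f x))"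
  unfolding tree_defect_def root_defect_def pendant_seq_def branch_seq_def
  by (intro continuous_intros)

lemma tree_defect_pos_at_threshold:
  fixes r1 r2 h q1 q2 :: nat and q :: real
  assumes q: "1 < q" and r2: "q\<^sup>2 + 1 / (q\<^sup>2 + 1) = r2" and "r1 \<le> r2"
    and "2 \<le> h" "2 \<le> q1" "2 \<le> q2"
  shows "0 < tree_defect r1 r2 h q1 q2 (q + 1 / q)"
proof -
  define L where "L = q + 1 / q"
  have H: "0 < pendant_seq L k" for k
    using pendant_seq_pos_ratio[OF _ L_def] q by simp
  have W: "0 < branch_seq L r1 k" and V: "0 < branch_seq L r2 k" for k
    using branch_seq_pos_ratio[OF q L_def] r2 \<open>r1 \<le> r2\<close> by auto
  show ?thesis
    unfolding tree_defect_def L_def[symmetric]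
  proof (rule root_defect_pos[of q L "pendant_seq L" h "branch_seq L r1" q1 "branch_seq L r2" q2,
        OF q L_def H W V])
    show "pendant_seq L h \<le> L * pendant_seq L (h - 1)"
      using cheb_seq_le_mult[of L 1 L "h - 1"] H[of "h - 2"] \<open>2 \<le> h\<close>
      unfolding pendant_seq_def by (simp add: less_imp_le numeral_2_eq_2)
    show "branch_seq L r1 q1 \<le> L * branch_seq L r1 (q1 - 1)"
      using cheb_seq_le_mult[of L _ _ "q1 - 1"] W[of "q1 - 2"] \<open>2 \<le> q1\<close>
      unfolding branch_seq_def by (simp add: less_imp_le numeral_2_eq_2)
    show "branch_seq L r2 (q2 - 1) = q * branch_seq L r2 q2"
      using branch_seq_geometric[OF q L_def r2[symmetric], of "q2 - 1"] \<open>2 \<le> q2\<close> by simp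
  qed
qed

lemma tree_defect_neg_large:
  fixes r1 r2 h q1 q2 :: nat and L :: real
  assumes L: "3 < L" and "r1 \<le> r2" and "r2 \<le> L - 1"
  shows "tree_defect r1 r2 h q1 q2 L < 0"
proof -
  have H: "0 < pendant_seq L k \<and> pendant_seq L k \<le> pendant_seq L (Suc k)" for k
    using pendant_seq_mono L by simp
  have W: "0 < branch_seq L r1 k \<and> branch_seq L r1 k \<le> branch_seq L r1 (Suc k)"
    and V: "0 < branch_seq L r2 k \<and> branch_seq L r2 k \<le> branch_seq L r2 (Suc k)" for k
    using branch_seq_mono assms by auto
  have mono: "x (m - 1) \<le> x m" if "\<And>k. x k \<le> x (Suc k)" for x :: "nat \<Rightarrow> real" and m
    using that[of "m - 1"] by (cases m) auto
  show ?thesis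
    unfolding tree_defect_def using H W V L
    by (intro root_defect_neg mono) auto
qed

lemma tree_defect_zero_beyond_threshold:
  fixes r1 r2 h q1 q2 :: nat and q0 :: real
  assumes q0: "1 < q0" "q0\<^sup>2 + 1 / (q0\<^sup>2 + 1) = r2" and "r1 \<le> r2"
    and "2 \<le> h" "2 \<le> q1" "2 \<le> q2"
  obtains q where "q0 < q" and "tree_defect r1 r2 h q1 q2 (q + 1 / q) = 0"
    and "branch_seq (q + 1 / q) r1 q1 * branch_seq (q + 1 / q) r2 q2 \<noteq> 0"
proof -
  define Q where "Q = real r2 + 2"
  have "0 < 1 / (q0\<^sup>2 + 1)" using square_plus_one_pos by simp
  moreover have "q0 < q0\<^sup>2" using q0 by (simp add: power2_eq_square)
  ultimately have "q0 < r2" "1 < r2" using q0 by linarith+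
  then have "q0 \<le> Q" "0 < Q" unfolding Q_def by auto
  have "0 < tree_defect r1 r2 h q1 q2 (q0 + 1 / q0)"
    using tree_defect_pos_at_threshold assms by blast
  moreover have "tree_defect r1 r2 h q1 q2 (Q + 1 / Q) < 0"
  proof (rule tree_defect_neg_large)
    have "0 < 1 / Q" using \<open>0 < Q\<close> by simp
    then show "3 < Q + 1 / Q" "real r2 \<le> Q + 1 / Q - 1"
      using \<open>1 < r2\<close> unfolding Q_def by linarith+
  qed (rule \<open>r1 \<le> r2\<close>)
  moreover have "continuous_on {q0..Q} (\<lambda>q. tree_defect r1 r2 h q1 q2 (q + 1 / q))"
    using q0 by (intro continuous_intros) auto
  ultimately obtain q where q: "q0 \<le> q" "q \<le> Q" "tree_defect r1 r2 h q1 q2 (q + 1 / q) = 0"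
    using IVT2'[of "\<lambda>q. tree_defect r1 r2 h q1 q2 (q + 1 / q)" Q 0 q0] \<open>q0 \<le> Q\<close> by auto
  moreover have "q \<noteq> q0"
    using q \<open>0 < tree_defect r1 r2 h q1 q2 (q0 + 1 / q0)\<close> by auto
  ultimately have "q0 < q" by simp
  then have "r2 < q\<^sup>2 + 1 / (q\<^sup>2 + 1)" using threshold_strict_mono[of q0 q] q0 by simp
  then have "0 < branch_seq (q + 1 / q) r1 q1" "0 < branch_seq (q + 1 / q) r2 q2"
    using branch_seq_pos_ratio[of q "q + 1 / q"] \<open>q0 < q\<close> q0 \<open>r1 \<le> r2\<close> by auto
  then show ?thesis using that \<open>q0 < q\<close> q(3) by simp
qed

lemma eigenvalue_le_largest_eigenvalue:
  fixes A :: "real mat"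
  assumes "A \<in> carrier_mat n n" and "eigenvalue A x"
  shows "x \<le> largest_eigenvalue A"
proof -
  have "{x. eigenvalue A x} = {x. poly (char_poly A) x = 0}"
    using eigenvalue_root_char_poly[OF assms(1)] by auto
  moreover have "char_poly A \<noteq> 0" using degree_monic_char_poly[OF assms(1)] by auto
  ultimately have "finite {x. eigenvalue A x}" using poly_roots_finite by simp
  then show ?thesis unfolding largest_eigenvalue_def using assms(2) by (intro Max_ge) auto
qed

lemma largest_eigenvalue_tree_adj:
  fixes r1 r2 h q1 q2 :: nat
  assumes "r1 \<le> r2" and "2 \<le> r2" and "2 \<le> h" and "2 \<le> q1" and "2 \<le> q2"
  obtains q where "1 < q" and "largest_eigenvalue (tree_adj r1 r2 h q1 q2) = q + 1 / q"
    and "r2 < q\<^sup>2 + 1 / (q\<^sup>2 + 1)"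
proof -
  interpret tree_shape r1 r2 h q1 q2 using assms by unfold_locales
  define lam where "lam = largest_eigenvalue (tree_adj r1 r2 h q1 q2)"
  have "2 \<le> real r2" using assms(2) by simp
  then obtain q0 where q0: "1 < q0" "q0\<^sup>2 + 1 / (q0\<^sup>2 + 1) = r2"
    by (rule threshold_surj)
  obtain qs where qs: "q0 < qs" "tree_defect r1 r2 h q1 q2 (qs + 1 / qs) = 0"
    "branch_seq (qs + 1 / qs) r1 q1 * branch_seq (qs + 1 / qs) r2 q2 \<noteq> 0"
    by (rule tree_defect_zero_beyond_threshold[OF q0 assms(1,3-5)])
  have A: "tree_adj r1 r2 h q1 q2 \<in> carrier_mat n n" unfolding tree_adj_def by simp
  have "eigenvalue (tree_adj r1 r2 h q1 q2) (qs + 1 / qs)"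
    by (rule eigenvalue_tree_adj_if_tree_defect_zero[OF qs(2,3)])
  then have le: "qs + 1 / qs \<le> lam" unfolding lam_def by (rule eigenvalue_le_largest_eigenvalue[OF A])
  have "2 \<le> qs + 1 / qs" using sum_inverse_strict_mono[of 1 qs] qs(1) q0(1) by simp
  then have "2 \<le> lam" using le by linarith
  then obtain q where q: "1 \<le> q" "lam = q + 1 / q" by (rule sum_inverse_surj)
  then have "qs \<le> q" using sum_inverse_le_imp_le[of qs q] qs(1) q0(1) le by simp
  then have "r2 < q\<^sup>2 + 1 / (q\<^sup>2 + 1)" using threshold_strict_mono[of q0 q] q0 qs(1) by simp
  moreover have "1 < q" using \<open>qs \<le> q\<close> qs(1) q0(1) by simp
  ultimately show ?thesis using that q(2) unfolding lam_def by blast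
qed

section \<open>The sequence \<open>z\<^sub>j\<close>\<close>

text \<open>
  In the coordinate (z - 1/t)/(z - t) the map z \<mapsto> t + 1/t - 1/z is multiplication by t^2;
  mobius_orbit t B j is the point with coordinate -B t^(2j).
\<close>

definition mobius_orbit :: "real \<Rightarrow> real \<Rightarrow> nat \<Rightarrow> real" where
  "mobius_orbit t B j = t + (inverse t - t) / (B * (t\<^sup>2) ^ j + 1)"

lemma mobius_orbit_eq_quotient:
  assumes "t \<noteq> 0" and "B * (t\<^sup>2) ^ j + 1 \<noteq> 0"
  shows "mobius_orbit t B j = (B * (t\<^sup>2) ^ Suc j + 1) / (t * (B * (t\<^sup>2) ^ j + 1))"
proof -
  define E where "E = B * (t\<^sup>2) ^ j"
  have Suc: "B * (t\<^sup>2) ^ Suc j + 1 = E * t\<^sup>2 + 1" by (simp add: E_def)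
  have "t * (E + 1) \<noteq> 0" using assms by (simp add: E_def)
  then show ?thesis
    using assms unfolding mobius_orbit_def Suc E_def[symmetric] by (simp add: field_simps power2_eq_square)
qed

lemma mobius_orbit_Suc:
  assumes "t \<noteq> 0" and "B * (t\<^sup>2) ^ j + 1 \<noteq> 0" and "B * (t\<^sup>2) ^ Suc j + 1 \<noteq> 0"
  shows "t + 1 / t - 1 / mobius_orbit t B j = mobius_orbit t B (Suc j)"
proof -
  define E where "E = B * (t\<^sup>2) ^ j"
  have Suc: "B * (t\<^sup>2) ^ Suc j + 1 = E * t\<^sup>2 + 1" by (simp add: E_def)
  have "t * (E + 1) \<noteq> 0" "t * (E * t\<^sup>2 + 1) \<noteq> 0"
    using assms(1) assms(2,3)[unfolded Suc E_def[symmetric]] by simp_all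
  then show ?thesis
    using assms unfolding mobius_orbit_eq_quotient[OF assms(1,2)]
    unfolding mobius_orbit_def Suc E_def[symmetric] by (simp add: field_simps power2_eq_square)
qed

lemma zseq_eq_mobius_orbit:
  assumes t: "t \<noteq> 0" and lam: "lam = - (t + 1 / t)"
    and start: "B * t\<^sup>2 + 1 \<noteq> 0" "zseq lam a2 r 1 = mobius_orbit t B 1"
    and "1 \<le> j" and nonzero: "\<forall>i. 1 \<le> i \<and> i < j \<longrightarrow> zseq lam a2 r i \<noteq> 0"
  shows "zseq lam a2 r j = mobius_orbit t B j"
proof -
  have "B * (t\<^sup>2) ^ j + 1 \<noteq> 0 \<and> zseq lam a2 r j = mobius_orbit t B j"
    using \<open>1 \<le> j\<close> nonzero
  proof (induction j rule: nat_induct_at_least)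
    case base
    then show ?case using start by simp
  next
    case (Suc j)
    then have den: "B * (t\<^sup>2) ^ j + 1 \<noteq> 0" and z: "zseq lam a2 r j = mobius_orbit t B j"
      by auto
    have "zseq lam a2 r j \<noteq> 0" using Suc by auto
    then have den': "B * (t\<^sup>2) ^ Suc j + 1 \<noteq> 0"
      using z mobius_orbit_eq_quotient[OF t den] by auto
    obtain i where j: "j = Suc i" using Suc.hyps by (cases j) auto
    have "zseq lam a2 r (Suc j) = t + 1 / t - 1 / zseq lam a2 r j"
      by (simp add: j lam)
    also have "\<dots> = mobius_orbit t B (Suc j)"
      using mobius_orbit_Suc[OF t den den'] z by simp
    finally show ?case using den' by simp
  qed
  then show ?thesis ..
qed

lemma zseq_one_eq_mobius_orbit:
  fixes t a2 r :: real
  assumes "t \<noteq> 0" and "t\<^sup>2 \<noteq> 1" and "a2 \<noteq> 0" and "a2 * t - r * t\<^sup>2 \<noteq> 0"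
  defines "B \<equiv> (r - a2 * t) / (a2 * t - r * t\<^sup>2)"
  shows "B * t\<^sup>2 + 1 \<noteq> 0" and "zseq (- (t + 1 / t)) a2 r 1 = mobius_orbit t B 1"
proof -
  have "a2 * t - r * t\<^sup>2 = t * (a2 - r * t)" by (simp add: power2_eq_square algebra_simps)
  then have ne: "a2 - r * t \<noteq> 0" using assms(4) by auto
  have den: "B * t\<^sup>2 + 1 = a2 * (1 - t\<^sup>2) / (a2 - r * t)"
    unfolding B_def using assms(1,4) ne by (simp add: field_simps power2_eq_square)
  then show "B * t\<^sup>2 + 1 \<noteq> 0" using assms(2,3) ne by simp
  have "mobius_orbit t B 1 = t + (inverse t - t) / (a2 * (1 - t\<^sup>2) / (a2 - r * t))"
    unfolding mobius_orbit_def using den by simp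
  also have "\<dots> = t + 1 / t - r / a2"
    using assms(1-3) ne by (simp add: field_simps power2_eq_square)
  finally show "zseq (- (t + 1 / t)) a2 r 1 = mobius_orbit t B 1" by simp
qed

lemma one_less_power2_if_less_minus_one:
  fixes t :: real
  assumes "t < -1"
  shows "1 < t\<^sup>2"
  using less_1_mult[of "- t" "- t"] assms by (simp add: power2_eq_square)

lemma inverse_minus_self_pos:
  fixes t :: real
  assumes "t < -1"
  shows "0 < inverse t - t"
proof -
  have "inverse t - t = (1 - t\<^sup>2) / t" using assms by (simp add: field_simps power2_eq_square)
  then show ?thesis using one_less_power2_if_less_minus_one[OF assms] assms by (simp add: divide_neg_neg)
qed

context
  fixes t B :: real
  assumes t: "t < -1" and B: "0 < B"
begin

lemma mobius_orbit_denominator_gt_one: "1 < B * (t\<^sup>2) ^ j + 1"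
proof -
  have "0 < t\<^sup>2" using one_less_power2_if_less_minus_one[OF t] by linarith
  then have "0 < (t\<^sup>2) ^ j" by (rule zero_less_power)
  then show ?thesis using B by simp
qed

lemma mobius_orbit_neg: "mobius_orbit t B j < 0"
proof -
  have "(inverse t - t) / (B * (t\<^sup>2) ^ j + 1) < inverse t - t"
    using inverse_minus_self_pos[OF t] mobius_orbit_denominator_gt_one by (simp add: divide_less_eq)
  moreover have "inverse t < 0" using t by simp
  ultimately show ?thesis unfolding mobius_orbit_def by linarith
qed

lemma mobius_orbit_decreasing: "mobius_orbit t B (Suc j) \<le> mobius_orbit t B j"
proof -
  have "(t\<^sup>2) ^ j \<le> (t\<^sup>2) ^ Suc j"
    using one_less_power2_if_less_minus_one[OF t] by (intro power_increasing) auto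
  then have "B * (t\<^sup>2) ^ j + 1 \<le> B * (t\<^sup>2) ^ Suc j + 1" using B by simp
  then show ?thesis
    using inverse_minus_self_pos[OF t] mobius_orbit_denominator_gt_one[of j]
      mobius_orbit_denominator_gt_one[of "Suc j"]
    unfolding mobius_orbit_def by (simp add: divide_left_mono)
qed

lemma mobius_orbit_tendsto: "mobius_orbit t B \<longlonglongrightarrow> t"
proof -
  have "filterlim (\<lambda>j. (t\<^sup>2) ^ j) at_infinity sequentially"
    using one_less_power2_if_less_minus_one[OF t] by (intro filterlim_realpow_sequentially_gt1) simp
  then have "filterlim (\<lambda>j. B * (t\<^sup>2) ^ j + 1) at_infinity sequentially"
    using B by (intro tendsto_add_filterlim_at_infinity' tendsto_mult_filterlim_at_infinity) auto
  then have "(\<lambda>j. t + (inverse t - t) / (B * (t\<^sup>2) ^ j + 1)) \<longlonglongrightarrow> t + 0"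
    by (intro tendsto_add tendsto_const tendsto_divide_0[OF tendsto_const])
  then show ?thesis unfolding mobius_orbit_def by simp
qed

end

lemma lam_bounds:
  fixes t lam :: real
  assumes t: "t < -1" and lam: "lam = - (t + 1 / t)"
  shows "1 < lam" and "lam < 2 * (- t)"
proof -
  have "0 < - (1 / t)" "- (1 / t) < 1" using t by (simp_all add: divide_simps)
  then show "1 < lam" "lam < 2 * (- t)" using t lam by linarith+
qed

lemma a2_neq_0:
  fixes t lam a2 :: real
  assumes "t < -1" and "lam = - (t + 1 / t)" and a2: "a2 = - lam + 1 / lam"
  shows "a2 \<noteq> 0"
proof -
  have "1 < lam" by (rule lam_bounds[OF assms(1,2)])
  then have "1 / lam < 1" by simp
  then show ?thesis using a2 \<open>1 < lam\<close> by linarith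
qed

lemma a2_div_lt_2:
  fixes t lam a2 :: real
  assumes t: "t < -1" and "lam = - (t + 1 / t)" and a2: "a2 = - lam + 1 / lam"
  shows "a2 / t < 2"
proof -
  note lam = lam_bounds[OF assms(1,2)]
  have "a2 / t = (lam - 1 / lam) / (- t)" using t lam unfolding a2 by (simp add: field_simps)
  also have "\<dots> < lam / (- t)" using t lam by (intro divide_strict_right_mono) auto
  also have "\<dots> < 2" using t lam by (subst pos_divide_less_eq) auto
  finally show ?thesis .
qed

lemma a2_mult_eq:
  fixes t lam a2 :: real
  assumes "t < -1" and lam: "lam = - (t + 1 / t)" and a2: "a2 = - lam + 1 / lam"
  shows "a2 * t = t\<^sup>2 + 1 / (t\<^sup>2 + 1)"
proof -
  have t: "t \<noteq> 0" using assms(1) by simp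
  have "lam = - ((t\<^sup>2 + 1) / t)" using t unfolding lam by (simp add: field_simps power2_eq_square)
  then have "a2 = (t\<^sup>2 + 1) / t - t / (t\<^sup>2 + 1)" unfolding a2 by simp
  then have "a2 * t = (t\<^sup>2 + 1) - t\<^sup>2 / (t\<^sup>2 + 1)"
    using t by (simp add: left_diff_distrib power2_eq_square)
  also have "\<dots> = t\<^sup>2 + 1 / (t\<^sup>2 + 1)"
    using square_plus_one_pos[of t] by (simp add: field_simps)
  finally show ?thesis .
qed

lemma closed_form_coeff_denominator:
  fixes t a2 r :: real
  assumes "t \<noteq> 0"
  shows "a2 * t - r * t\<^sup>2 = t\<^sup>2 * (a2 / t - r)"
  using assms by (simp add: field_simps power2_eq_square)

lemma zseq_closed_form:
  fixes t lam a2 r :: real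
  assumes t: "t < -1" and lam: "lam = - (t + 1 / t)" and a2: "a2 = - lam + 1 / lam"
    and r: "r \<noteq> a2 / t" and "1 \<le> j" and "\<forall>i. 1 \<le> i \<and> i < j \<longrightarrow> zseq lam a2 r i \<noteq> 0"
  shows "zseq lam a2 r j
    = t + (inverse t - t) / ((r - a2 * t) / (a2 * t - r * t\<^sup>2) * (t\<^sup>2) ^ j + 1)"
proof -
  define B where "B = (r - a2 * t) / (a2 * t - r * t\<^sup>2)"
  have t0: "t \<noteq> 0" and t2: "t\<^sup>2 \<noteq> 1" using one_less_power2_if_less_minus_one[OF t] t by auto
  moreover have "a2 * t - r * t\<^sup>2 \<noteq> 0" using r t0 by (simp add: closed_form_coeff_denominator)
  ultimately have start: "B * t\<^sup>2 + 1 \<noteq> 0" "zseq lam a2 r 1 = mobius_orbit t B 1"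
    using zseq_one_eq_mobius_orbit[OF t0 t2 a2_neq_0[OF t lam a2]] lam unfolding B_def by auto
  have "zseq lam a2 r j = mobius_orbit t B j"
    by (rule zseq_eq_mobius_orbit[OF t0 lam start assms(5,6)])
  then show ?thesis unfolding mobius_orbit_def B_def .
qed

lemma zseq_neg_decreasing_tendsto:
  fixes t lam a2 r :: real
  assumes t: "t < -1" and lam: "lam = - (t + 1 / t)" and a2: "a2 = - lam + 1 / lam"
    and B: "0 < (r - a2 * t) / (a2 * t - r * t\<^sup>2)"
  shows "(\<forall>j\<ge>1. zseq lam a2 r j < 0) \<and> (\<forall>j\<ge>1. zseq lam a2 r (Suc j) \<le> zseq lam a2 r j)
    \<and> zseq lam a2 r \<longlonglongrightarrow> t"
proof -
  define B where "B = (r - a2 * t) / (a2 * t - r * t\<^sup>2)"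
  have t0: "t \<noteq> 0" and t2: "t\<^sup>2 \<noteq> 1" using one_less_power2_if_less_minus_one[OF t] t by auto
  moreover have "a2 * t - r * t\<^sup>2 \<noteq> 0" using B by auto
  ultimately have start: "B * t\<^sup>2 + 1 \<noteq> 0" "zseq lam a2 r 1 = mobius_orbit t B 1"
    using zseq_one_eq_mobius_orbit[OF t0 t2 a2_neq_0[OF t lam a2]] lam unfolding B_def by auto
  have orbit: "zseq lam a2 r j = mobius_orbit t B j" if "1 \<le> j" for j
    using that
  proof (induction j rule: less_induct)
    case (less j)
    have "zseq lam a2 r i \<noteq> 0" if "1 \<le> i" "i < j" for i
      using less.IH[OF that(2,1)] mobius_orbit_neg[OF t] B unfolding B_def by (metis less_irrefl)
    then show ?case using zseq_eq_mobius_orbit[OF t0 lam start less.prems] by blast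
  qed
  have "0 < B" using B unfolding B_def .
  have "(\<lambda>j. mobius_orbit t B j) \<longlonglongrightarrow> t" by (rule mobius_orbit_tendsto[OF t \<open>0 < B\<close>])
  moreover have "\<forall>\<^sub>F j in sequentially. mobius_orbit t B j = zseq lam a2 r j"
    using orbit by (auto simp: eventually_sequentially intro!: exI[of _ 1])
  ultimately have "zseq lam a2 r \<longlonglongrightarrow> t" by (rule Lim_transform_eventually)
  then show ?thesis
    using orbit mobius_orbit_neg[OF t \<open>0 < B\<close>] mobius_orbit_decreasing[OF t \<open>0 < B\<close>] by simp
qed

lemma closed_form_coeff_properties:
  fixes t a2 :: real and beta :: "real \<Rightarrow> real"
  assumes t: "t < -1" and lo: "a2 / t < 2" and hi: "2 < a2 * t"
    and beta_eq: "\<And>r. beta r = (r - a2 * t) / (a2 * t - r * t\<^sup>2)"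
  shows "continuous_on ({2<..} - {a2 / t}) beta"
    and "{r \<in> {2<..} - {a2 / t}. beta r = 0} = {a2 * t}"
    and "\<forall>r \<in> {a2 / t<..<a2 * t}. 0 < beta r"
proof -
  have t0: "t \<noteq> 0" and "0 < t\<^sup>2" using t by auto
  have beta: "beta = (\<lambda>r. (r - a2 * t) / (t\<^sup>2 * (a2 / t - r)))"
    by (rule ext) (simp add: beta_eq closed_form_coeff_denominator[OF t0])
  show "continuous_on ({2<..} - {a2 / t}) beta"
    unfolding beta using t0 by (intro continuous_intros) auto
  show "{r \<in> {2<..} - {a2 / t}. beta r = 0} = {a2 * t}"
    using lo hi t0 unfolding beta by auto
  show "\<forall>r \<in> {a2 / t<..<a2 * t}. 0 < beta r"
    unfolding beta using \<open>0 < t\<^sup>2\<close> by (auto intro!: divide_neg_neg mult_pos_neg)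
qed

theorem theorem3p2:
  fixes r1 r2 h q1 q2 :: nat and lam theta a2 rlo rhi :: real and beta :: "real \<Rightarrow> real"
  assumes "2 \<le> r1" and "r1 < r2"
    and "2 \<le> h" and "2 \<le> q1" and "2 \<le> q2"
  defines "lam \<equiv> largest_eigenvalue (tree_adj r1 r2 h q1 q2)"
    and "theta \<equiv> (- lam - sqrt (lam\<^sup>2 - 4)) / 2"
    and "a2 \<equiv> - lam + 1 / lam"
    and "beta \<equiv> (\<lambda>r. (r - a2 * theta) / (a2 * theta - r * theta\<^sup>2))"
    and "rlo \<equiv> a2 / theta"
    and "rhi \<equiv> a2 * theta"
  shows
    "(\<forall>r::real. r \<ge> 2 \<longrightarrow> (\<forall>j\<ge>1. (\<forall>i. 1 \<le> i \<and> i < j \<longrightarrow> zseq lam a2 r i \<noteq> 0) \<longrightarrow>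
        zseq lam a2 r j = theta + (inverse theta - theta) / (beta r * (theta\<^sup>2) ^ j + 1)))
   \<and> continuous_on ({2<..} - {rlo}) beta
   \<and> {r \<in> {2<..} - {rlo}. beta r = 0} = {rhi}
   \<and> (\<forall>r \<in> {rlo<..<rhi}. beta r > 0)
   \<and> (\<forall>r \<in> {real r1, real r2}.
        (\<forall>j\<ge>1. zseq lam a2 r j < 0)
      \<and> (\<forall>j\<ge>1. zseq lam a2 r (Suc j) \<le> zseq lam a2 r j)
      \<and> (zseq lam a2 r \<longlonglongrightarrow> theta))"
proof -
  have "r1 \<le> r2" "2 \<le> r2" using assms(1,2) by simp_all
  then obtain q where q: "1 < q" "lam = q + 1 / q" "real r2 < q\<^sup>2 + 1 / (q\<^sup>2 + 1)"
    using largest_eigenvalue_tree_adj assms(3-5) unfolding lam_def by metis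
  have theta: "theta = - q" using sum_inverse_discriminant[of q] q unfolding theta_def by simp
  then have t: "theta < -1" and lam: "lam = - (theta + 1 / theta)" using q by simp_all
  have a2: "a2 = - lam + 1 / lam" unfolding a2_def ..
  have rlo: "rlo < 2" unfolding rlo_def by (rule a2_div_lt_2[OF t lam a2])
  have rhi: "real r2 < rhi" unfolding rhi_def a2_mult_eq[OF t lam a2] using theta q by simp
  have r1: "rlo < real r1" "real r1 < rhi" using rlo rhi assms(1,2) by simp_all
  then have "2 < rhi" using assms(1) by simp
  have "beta r = (r - a2 * theta) / (a2 * theta - r * theta\<^sup>2)" for r unfolding beta_def ..
  note beta = closed_form_coeff_properties[OF t rlo[unfolded rlo_def] \<open>2 < rhi\<close>[unfolded rhi_def] this,
      folded rlo_def rhi_def]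
  have closed_form: "zseq lam a2 r j = theta + (inverse theta - theta) / (beta r * (theta\<^sup>2) ^ j + 1)"
    if "2 \<le> r" "1 \<le> j" "\<forall>i. 1 \<le> i \<and> i < j \<longrightarrow> zseq lam a2 r i \<noteq> 0" for r j
    using zseq_closed_form[OF t lam a2 _ that(2,3)] rlo that(1) unfolding beta_def rlo_def by simp
  have limit: "(\<forall>j\<ge>1. zseq lam a2 r j < 0) \<and> (\<forall>j\<ge>1. zseq lam a2 r (Suc j) \<le> zseq lam a2 r j)
      \<and> zseq lam a2 r \<longlonglongrightarrow> theta" if "r \<in> {real r1, real r2}" for r
  proof -
    have "0 < beta r" using beta(3) that r1 rhi assms(2) by auto
    then show ?thesis using zseq_neg_decreasing_tendsto[OF t lam a2] unfolding beta_def by blast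
  qed
  show ?thesis using closed_form beta limit by blast
qed

end
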